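(* Let $\hat q$ be an $n\times n$ parametric matrix and $M$ an $n\times n$ $(\hat q)$-Manin matrix over $\mathfrak R$. Then $$\sum_{k=0}^n(-1)^k e_k\,M^{[n-k]}=0.$$
   Context: $\mathfrak R$ is an associative unital algebra over $\mathbb C$. A parametric $n\times n$ matrix is $\hat q=(q_{ij})$ with nonzero complex entries, $q_{ij}q_{ji}=1$, $q_{ii}=1$. An $n\times n$ matrix $M$ over $\mathfrak R$ is a $(\hat q)$-Manin matrix if $M_{ik}M_{jk}=q_{ji}M_{jk}M_{ik}$ for $i<j$ and all $k$, and $M_{ik}M_{jl}-q_{ji}q_{kl}M_{jl}M_{ik}+q_{kl}M_{il}M_{jk}-q_{ji}M_{jk}M_{il}=0$ for $i<j$, $k<l$. Let $P_{\hat q}=\sum_{i,j}q_{ji}E_{ij}\otimes E_{ji}$ ($E_{ij}$ matrix units); it satisfies $P_{\hat q}^2=1$ and the braid relation, so $s_i\mapsto P_{\hat q}^{(i,i+1)}$ defines an action $\sigma\mapsto P_{\hat q}^\sigma$ of $S_k$ on $(\mathbb C^n)^{\otimes k}$; $A_{\hat q}^{(k)}=\frac1{k!}\sum_{\sigma\in S_k}\mathrm{sgn}(\sigma)P_{\hat q}^{\sigma}$. $M_a$ is $M$ acting on the $a$-th tensor factor. $e_0=1$ and $e_k=\mathrm{tr}_{1,\dots,k}A_{\hat q}^{(k)}M_1\cdots M_k\in\mathfrak R$ (full trace). For $n\times n$ matrices $B,C$ over $\mathfrak R$, $B*C=\mathrm{tr}_1(P_{\hat q}B_1C_2)$ (partial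 trace over the first tensor factor, $B_1=B\otimes1$, $C_2=1\otimes C$). $M^{[0]}=1$ (identity matrix), $M^{[1]}=M$, $M^{[k]}=M^{[k-1]}*M$ for $k>1$. $e_kM^{[n-k]}$ is left multiplication of the matrix by $e_k$. *)

theory Defs
  imports Complex_Main "HOL-Combinatorics.Combinatorics"
begin

text \<open>Indices of the n x n matrices are 0..n-1 (type nat, with bounds).
  The algebra R is a type 'a of class ring_1 together with a structure map
  iota : complex => 'a which is a unital ring homomorphism into the centre
  (this is exactly an associative unital C-algebra structure; c*x := iota c * x).
  Vectors of (C^n)^(tensor k) are indexed by multi-indices: lists of length k with
  entries < n; operators on (C^n)^(tensor k) are matrices indexed by such lists.\<close>

definition is_C_algebra :: "(complex \<Rightarrow> 'a::ring_1) \<Rightarrow> bool" where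
  "is_C_algebra \<iota> \<longleftrightarrow> \<iota> 1 = 1 \<and> (\<forall>a b. \<iota> (a + b) = \<iota> a + \<iota> b)
     \<and> (\<forall>a b. \<iota> (a * b) = \<iota> a * \<iota> b) \<and> (\<forall>a x. \<iota> a * x = x * \<iota> a)"

definition is_parametric :: "nat \<Rightarrow> (nat \<Rightarrow> nat \<Rightarrow> complex) \<Rightarrow> bool" where
  "is_parametric n q \<longleftrightarrow> (\<forall>i<n. \<forall>j<n. q i j \<noteq> 0 \<and> q i j * q j i = 1) \<and> (\<forall>i<n. q i i = 1)"

definition manin :: "(complex \<Rightarrow> 'a::ring_1) \<Rightarrow> nat \<Rightarrow> (nat \<Rightarrow> nat \<Rightarrow> complex)
    \<Rightarrow> (nat \<Rightarrow> nat \<Rightarrow> 'a) \<Rightarrow> bool" where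
  "manin \<iota> n q M \<longleftrightarrow>
     (\<forall>i j k. i < j \<and> j < n \<and> k < n \<longrightarrow> M i k * M j k = \<iota> (q j i) * M j k * M i k) \<and>
     (\<forall>i j k l. i < j \<and> j < n \<and> k < l \<and> l < n \<longrightarrow>
        M i k * M j l - \<iota> (q j i * q k l) * M j l * M i k + \<iota> (q k l) * M i l * M j k
          - \<iota> (q j i) * M j k * M i l = 0)"

text \<open>Matrix units and P_q = sum_{a,b} q_ba E_ab (x) E_ba, as a matrix on C^n (x) C^n
  with entries ((i,j),(k,l)); (A (x) B)_{(i,j),(k,l)} = A_ik B_jl.\<close>
definition Emat :: "nat \<Rightarrow> nat \<Rightarrow> nat \<Rightarrow> nat \<Rightarrow> complex" where
  "Emat a b i j = (if i = a \<and> j = b then 1 else 0)"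

definition Pq :: "nat \<Rightarrow> (nat \<Rightarrow> nat \<Rightarrow> complex) \<Rightarrow> nat \<times> nat \<Rightarrow> nat \<times> nat \<Rightarrow> complex" where
  "Pq n q x y = (\<Sum>a<n. \<Sum>b<n. q b a * (Emat a b (fst x) (fst y) * Emat b a (snd x) (snd y)))"

definition idx :: "nat \<Rightarrow> nat \<Rightarrow> nat list set" where
  "idx n k = {xs. length xs = k \<and> set xs \<subseteq> {..<n}}"

text \<open>P_q acting on the tensor factors p, p+1 (0-based) of (C^n)^(tensor k).\<close>
definition Ploc :: "nat \<Rightarrow> (nat \<Rightarrow> nat \<Rightarrow> complex) \<Rightarrow> nat \<Rightarrow> nat \<Rightarrow> nat list \<Rightarrow> nat list \<Rightarrow> complex" where
  "Ploc n q k p xs ys = Pq n q (xs ! p, xs ! Suc p) (ys ! p, ys ! Suc p) *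
     (if \<forall>r<k. r \<noteq> p \<and> r \<noteq> Suc p \<longrightarrow> xs ! r = ys ! r then 1 else 0)"

definition mmul :: "nat \<Rightarrow> nat \<Rightarrow> (nat list \<Rightarrow> nat list \<Rightarrow> 'a::semiring_0)
    \<Rightarrow> (nat list \<Rightarrow> nat list \<Rightarrow> 'a) \<Rightarrow> nat list \<Rightarrow> nat list \<Rightarrow> 'a" where
  "mmul n k A B xs ys = (\<Sum>zs\<in>idx n k. A xs zs * B zs ys)"

definition mid :: "nat list \<Rightarrow> nat list \<Rightarrow> 'a::{zero,one}" where
  "mid xs ys = (if xs = ys then 1 else 0)"

definition word_perm :: "nat list \<Rightarrow> nat \<Rightarrow> nat" where
  "word_perm w = foldr (\<lambda>p f. transpose p (Suc p) \<circ> f) w id"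

definition word_mat :: "nat \<Rightarrow> (nat \<Rightarrow> nat \<Rightarrow> complex) \<Rightarrow> nat \<Rightarrow> nat list
    \<Rightarrow> nat list \<Rightarrow> nat list \<Rightarrow> complex" where
  "word_mat n q k w = foldr (\<lambda>p A. mmul n k (Ploc n q k p) A) w mid"

text \<open>P_q^sigma: the value of the action s_p |-> P_q^(p,p+1) on sigma, computed
  along some word in the generators representing sigma.\<close>
definition Pperm :: "nat \<Rightarrow> (nat \<Rightarrow> nat \<Rightarrow> complex) \<Rightarrow> nat \<Rightarrow> (nat \<Rightarrow> nat)
    \<Rightarrow> nat list \<Rightarrow> nat list \<Rightarrow> complex" where
  "Pperm n q k \<sigma> = word_mat n q k
     (SOME w. (\<forall>p\<in>set w. Suc p < k) \<and> word_perm w = \<sigma>)"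

definition Aq :: "nat \<Rightarrow> (nat \<Rightarrow> nat \<Rightarrow> complex) \<Rightarrow> nat
    \<Rightarrow> nat list \<Rightarrow> nat list \<Rightarrow> complex" where
  "Aq n q k xs ys = (1 / of_nat (fact k)) *
     (\<Sum>\<sigma>\<in>{\<sigma>. \<sigma> permutes {..<k}}. of_int (sign \<sigma>) * Pperm n q k \<sigma> xs ys)"

text \<open>M acting on tensor factor a (0-based) of (C^n)^(tensor k).\<close>
definition Mloc :: "nat \<Rightarrow> (nat \<Rightarrow> nat \<Rightarrow> 'a::ring_1) \<Rightarrow> nat \<Rightarrow> nat list \<Rightarrow> nat list \<Rightarrow> 'a" where
  "Mloc k M a xs ys = M (xs ! a) (ys ! a) *
     (if \<forall>r<k. r \<noteq> a \<longrightarrow> xs ! r = ys ! r then 1 else 0)"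

definition Mprod :: "nat \<Rightarrow> (nat \<Rightarrow> nat \<Rightarrow> 'a::ring_1) \<Rightarrow> nat \<Rightarrow> nat list \<Rightarrow> nat list \<Rightarrow> 'a" where
  "Mprod n M k = foldr (\<lambda>a A. mmul n k (Mloc k M a) A) [0..<k] mid"

text \<open>e_k = tr_{1..k} A^(k) M_1 ... M_k (e_0 = 1 results automatically).\<close>
definition ecoef :: "(complex \<Rightarrow> 'a::ring_1) \<Rightarrow> nat \<Rightarrow> (nat \<Rightarrow> nat \<Rightarrow> complex)
    \<Rightarrow> (nat \<Rightarrow> nat \<Rightarrow> 'a) \<Rightarrow> nat \<Rightarrow> 'a" where
  "ecoef \<iota> n q M k = (\<Sum>xs\<in>idx n k. \<Sum>ys\<in>idx n k.
       \<iota> (Aq n q k xs ys) * Mprod n M k ys xs)"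

text \<open>B * C = tr_1 (P_q B_1 C_2); (B_1 C_2)_{(i,j),(k,l)} = B_ik C_jl.\<close>
definition qstar :: "(complex \<Rightarrow> 'a::ring_1) \<Rightarrow> nat \<Rightarrow> (nat \<Rightarrow> nat \<Rightarrow> complex)
    \<Rightarrow> (nat \<Rightarrow> nat \<Rightarrow> 'a) \<Rightarrow> (nat \<Rightarrow> nat \<Rightarrow> 'a) \<Rightarrow> nat \<Rightarrow> nat \<Rightarrow> 'a" where
  "qstar \<iota> n q B C j l = (\<Sum>i<n. \<Sum>a<n. \<Sum>b<n. \<iota> (Pq n q (i, j) (a, b)) * (B a i * C b l))"

fun qpow :: "(complex \<Rightarrow> 'a::ring_1) \<Rightarrow> nat \<Rightarrow> (nat \<Rightarrow> nat \<Rightarrow> complex)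
    \<Rightarrow> (nat \<Rightarrow> nat \<Rightarrow> 'a) \<Rightarrow> nat \<Rightarrow> nat \<Rightarrow> nat \<Rightarrow> 'a" where
  "qpow \<iota> n q M 0 = (\<lambda>i j. if i = j then 1 else 0)"
| "qpow \<iota> n q M (Suc 0) = M"
| "qpow \<iota> n q M (Suc (Suc k)) = qstar \<iota> n q (qpow \<iota> n q M (Suc k)) M"

end

theory Submission
  imports Defs
begin

text \<open>
  Let W(zs) be the product of the q u v over the inversions (u before v and u > v) of a
  multi-index zs. Each factor P_q^(p,p+1) maps a basis vector to the one with the entries p, p+1
  swapped, times the quotient of their weights W; hence P_q^sigma is the permutation sigma
  twisted by W(ys)/W(xs), whatever word in the generators is used for sigma, and A_q^(k) is the
  classical antisymmetrizer conjugated by W.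

  Let G_m be the partial trace over the first m factors of (m+1)! A_q^(m+1) M_1 ... M_m, a matrix
  acting on the last factor. Sorting the permutations of m+1 letters by the image of the last
  slot splits G_(m+1)(j,l) into the diagonal part (m+1)! e_(m+1) [j = l] and m+1 terms, one for
  each position. The Manin relations say precisely that the q-antisymmetrized monomials change
  sign when two adjacent column indices are swapped; this makes all m+1 terms equal to the last
  one, which is q j l (G_m M)(j,l). So (-1)^m q l j G_m(j,l) / m! obeys the recursion of the
  partial sums of the sum over k of (-1)^k e_k M^[m-k], and for m = n it vanishes because
  A^(n+1) = 0 on (C^n)^(tensor n+1).
\<close>

section \<open>Multi-indices and adjacent transpositions\<close>

lemma finite_idx [simp]: "finite (idx n k)"
  unfolding idx_def using finite_lists_length_eq[of "{..<n}" k] by (simp add: conj_commute)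

lemma idx_iff: "xs \<in> idx n k \<longleftrightarrow> length xs = k \<and> (\<forall>i<k. xs ! i < n)"
  by (auto simp: idx_def in_set_conv_nth subset_iff)

lemma length_idx: "xs \<in> idx n k \<Longrightarrow> length xs = k"
  by (simp add: idx_def)

lemma idx_0: "idx n 0 = {[]}"
  by (auto simp: idx_def)

lemma list_update_in_idx: "xs \<in> idx n k \<Longrightarrow> v < n \<Longrightarrow> xs[i := v] \<in> idx n k"
  by (auto simp: idx_def dest: set_update_subset_insert[THEN subsetD])

lemma sum_idx_Suc: "(\<Sum>xs\<in>idx n (Suc m). f xs) = (\<Sum>xs\<in>idx n m. \<Sum>a<n. f (xs @ [a]))"
proof -
  have "bij_betw (\<lambda>(xs, a). xs @ [a]) (idx n m \<times> {..<n}) (idx n (Suc m))"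
  proof (rule bij_betw_byWitness[where f' = "\<lambda>ys. (butlast ys, last ys)"])
    show "(\<lambda>ys. (butlast ys, last ys)) ` idx n (Suc m) \<subseteq> idx n m \<times> {..<n}"
      by (auto simp: idx_def dest: in_set_butlastD)
         (metis last_in_set length_0_conv lessThan_iff nat.distinct(1) subsetD)
  qed (auto simp: idx_def intro: append_butlast_last_id)
  then show ?thesis
    by (simp add: sum.reindex_bij_betw[symmetric] sum.cartesian_product split_def)
qed

lemma sum_idx_list_update:
  assumes "i < m" "a < n" "b < n"
  shows "(\<Sum>xs\<in>idx n m. if xs ! i = b then g xs else 0) =
    (\<Sum>zs\<in>idx n m. if zs ! i = a then g (zs[i := b]) else 0)"
proof -
  have "(\<Sum>xs\<in>{xs \<in> idx n m. xs ! i = b}. g xs) = (\<Sum>zs\<in>{zs \<in> idx n m. zs ! i = a}. g (zs[i := b]))"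
    by (rule sum.reindex_bij_witness[where j = "\<lambda>xs. xs[i := a]" and i = "\<lambda>zs. zs[i := b]"])
       (use assms in \<open>auto simp: list_update_in_idx dest: length_idx\<close>)
  then show ?thesis
    by (simp add: sum.inter_filter)
qed

definition swap_adj :: "nat \<Rightarrow> 'b list \<Rightarrow> 'b list" where
  "swap_adj p xs = xs[p := xs ! Suc p, Suc p := xs ! p]"

lemma length_swap_adj [simp]: "length (swap_adj p xs) = length xs"
  by (simp add: swap_adj_def)

lemma nth_swap_adj:
  assumes "Suc p < length xs" "r < length xs"
  shows "swap_adj p xs ! r = (if r = p then xs ! Suc p else if r = Suc p then xs ! p else xs ! r)"
  using assms by (auto simp: swap_adj_def nth_list_update)

lemma swap_adj_swap_adj [simp]: "Suc p < length xs \<Longrightarrow> swap_adj p (swap_adj p xs) = xs"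
  by (intro nth_equalityI) (auto simp: nth_swap_adj)

lemma swap_adj_Cons_Suc: "swap_adj (Suc p) (z # zs) = z # swap_adj p zs"
  by (simp add: swap_adj_def)

lemma permute_list_transpose_Suc:
  "Suc p < length xs \<Longrightarrow> permute_list (transpose p (Suc p)) xs = swap_adj p xs"
  by (intro nth_equalityI) (auto simp: permute_list_def nth_swap_adj transpose_def)

lemma mset_swap_adj: "Suc p < length xs \<Longrightarrow> mset (swap_adj p xs) = mset xs"
  unfolding swap_adj_def by (rule mset_swap) auto

lemma swap_adj_in_idx: "xs \<in> idx n k \<Longrightarrow> Suc p < k \<Longrightarrow> swap_adj p xs \<in> idx n k"
  by (auto simp: idx_iff nth_swap_adj)

lemma sum_idx_swap_adj:
  "Suc p < m \<Longrightarrow> (\<Sum>ys\<in>idx n m. g (swap_adj p ys)) = (\<Sum>ys\<in>idx n m. g ys)"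
  by (rule sum.reindex_bij_witness[where i = "swap_adj p" and j = "swap_adj p"])
     (auto simp: swap_adj_in_idx dest: length_idx)

lemma swap_adj_append:
  "length xs1 = p \<Longrightarrow> swap_adj p (xs1 @ a # b # xs2) = xs1 @ b # a # xs2"
  by (simp add: swap_adj_def list_update_append nth_append)

lemma split_at_adj:
  assumes "Suc p < length xs"
  obtains xs1 a b xs2 where "xs = xs1 @ a # b # xs2" "length xs1 = p"
proof
  show "xs = take p xs @ xs ! p # xs ! Suc p # drop (Suc (Suc p)) xs"
    using assms by (metis Cons_nth_drop_Suc Suc_lessD append_take_drop_id)
qed (use assms in simp)

section \<open>Inversion weights\<close>

definition pair_weight :: "(nat \<Rightarrow> nat \<Rightarrow> complex) \<Rightarrow> nat \<Rightarrow> nat \<Rightarrow> complex" where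
  "pair_weight q u v = (if v < u then q u v else 1)"

fun inv_weight :: "(nat \<Rightarrow> nat \<Rightarrow> complex) \<Rightarrow> nat list \<Rightarrow> complex" where
  "inv_weight q [] = 1"
| "inv_weight q (z # zs) = prod_list (map (pair_weight q z) zs) * inv_weight q zs"

definition snoc_weight :: "(nat \<Rightarrow> nat \<Rightarrow> complex) \<Rightarrow> nat \<Rightarrow> nat list \<Rightarrow> complex" where
  "snoc_weight q a us = prod_list (map (\<lambda>u. pair_weight q u a) us)"

definition snoc_ratio :: "(nat \<Rightarrow> nat \<Rightarrow> complex) \<Rightarrow> nat \<Rightarrow> nat \<Rightarrow> nat list \<Rightarrow> complex" where
  "snoc_ratio q j l zs = snoc_weight q l zs / (snoc_weight q j zs * pair_weight q l j)"

lemma pair_weight_same [simp]: "pair_weight q u u = 1"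
  by (simp add: pair_weight_def)

lemma pair_weight_swap:
  assumes "is_parametric n q" "u < n" "v < n"
  shows "pair_weight q v u = q v u * pair_weight q u v"
  using assms unfolding is_parametric_def pair_weight_def
  by (cases "u < v"; cases "v < u") (auto simp: mult.commute)

lemma pair_weight_nonzero:
  "is_parametric n q \<Longrightarrow> u < n \<Longrightarrow> v < n \<Longrightarrow> pair_weight q u v \<noteq> 0"
  unfolding is_parametric_def pair_weight_def by auto

lemma inv_weight_snoc: "inv_weight q (us @ [a]) = inv_weight q us * snoc_weight q a us"
  by (induct us) (simp_all add: snoc_weight_def algebra_simps)

lemma snoc_weight_snoc: "snoc_weight q a (us @ [b]) = snoc_weight q a us * pair_weight q b a"
  by (simp add: snoc_weight_def)

lemma inv_weight_nonzero: "is_parametric n q \<Longrightarrow> zs \<in> idx n m \<Longrightarrow> inv_weight q zs \<noteq> 0"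
  unfolding idx_def
  by (induct zs arbitrary: m) (auto simp: prod_list_zero_iff pair_weight_nonzero)

lemma snoc_weight_nonzero:
  "is_parametric n q \<Longrightarrow> zs \<in> idx n m \<Longrightarrow> a < n \<Longrightarrow> snoc_weight q a zs \<noteq> 0"
  by (auto simp: snoc_weight_def idx_def prod_list_zero_iff dest: pair_weight_nonzero)

lemma snoc_weight_mset: "mset xs = mset ys \<Longrightarrow> snoc_weight q a xs = snoc_weight q a ys"
  unfolding snoc_weight_def by (metis mset_map prod_mset_prod_list)

lemma snoc_ratio_mset: "mset xs = mset ys \<Longrightarrow> snoc_ratio q j l xs = snoc_ratio q j l ys"
  unfolding snoc_ratio_def by (metis snoc_weight_mset)

lemma snoc_weight_list_update:
  "i < length zs \<Longrightarrow>
    snoc_weight q a (zs[i := v]) * pair_weight q (zs ! i) a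
      = snoc_weight q a zs * pair_weight q v a"
  unfolding snoc_weight_def
  by (induct zs arbitrary: i) (auto simp: algebra_simps split: nat.split)

lemma inv_weight_swap_adj:
  assumes "is_parametric n q" "set xs \<subseteq> {..<n}" "Suc p < length xs"
  shows "inv_weight q (swap_adj p xs) = q (xs ! Suc p) (xs ! p) * inv_weight q xs"
  using assms(2,3)
proof (induct xs arbitrary: p)
  case (Cons z zs)
  show ?case
  proof (cases p)
    case 0
    then obtain v rest where zs: "zs = v # rest" using Cons by (cases zs) auto
    have "swap_adj p (z # zs) = v # z # rest" using 0 zs by (simp add: swap_adj_def)
    moreover have "pair_weight q v z = q v z * pair_weight q z v"
      using Cons.prems zs by (intro pair_weight_swap[OF assms(1)]) auto
    ultimately show ?thesis using 0 zs by (simp add: algebra_simps)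
  next
    case (Suc p')
    have "prod_list (map (pair_weight q z) (swap_adj p' zs)) = prod_list (map (pair_weight q z) zs)"
      using Cons.prems Suc by
        (metis length_Cons mset_map mset_swap_adj not_less_eq prod_mset_prod_list)
    then show ?thesis using Cons Suc by (simp add: swap_adj_Cons_Suc algebra_simps)
  qed
qed simp

lemma inv_weight_snoc_ratio:
  assumes "is_parametric n q" "xs \<in> idx n m" "j < n" "mset ys = mset xs"
  shows "inv_weight q (ys @ [j]) / inv_weight q (xs @ [j]) = inv_weight q ys / inv_weight q xs"
  using snoc_weight_nonzero[OF assms(1-3)] snoc_weight_mset[OF assms(4)]
  by (simp add: inv_weight_snoc)

lemma inv_weight_relabel_ratio:
  assumes par: "is_parametric n q" and zs: "zs \<in> idx n m" and "i < m" "zs ! i = j" "j < n" "l < n"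
    and "mset ys = mset zs"
  shows "inv_weight q (ys @ [l]) / inv_weight q (zs[i := l] @ [j]) =
    snoc_ratio q j l zs * (inv_weight q ys / inv_weight q (zs[i := l]))"
proof -
  have "snoc_weight q j (zs[i := l]) = snoc_weight q j zs * pair_weight q l j"
    using snoc_weight_list_update[of i zs q j l] assms by (simp add: length_idx)
  moreover have "inv_weight q (zs[i := l]) \<noteq> 0" "snoc_weight q j zs \<noteq> 0" "pair_weight q l j \<noteq> 0"
    using inv_weight_nonzero[OF par list_update_in_idx[OF zs]] snoc_weight_nonzero[OF par zs]
      pair_weight_nonzero[OF par] assms by auto
  ultimately show ?thesis
    using snoc_weight_mset[OF assms(7)] by (simp add: inv_weight_snoc snoc_ratio_def field_simps)
qed

lemma snoc_ratio_snoc: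
  assumes par: "is_parametric n q" and zs: "zs \<in> idx n m" and "j < n" "l < n"
  shows "snoc_ratio q j l (zs @ [j]) / inv_weight q (zs @ [l]) = q j l / inv_weight q (zs @ [j])"
proof -
  have "inv_weight q zs \<noteq> 0" "snoc_weight q j zs \<noteq> 0" "snoc_weight q l zs \<noteq> 0"
    "pair_weight q l j \<noteq> 0"
    using inv_weight_nonzero[OF par zs] snoc_weight_nonzero[OF par zs] pair_weight_nonzero[OF par]
      assms by auto
  then show ?thesis
    using pair_weight_swap[OF par, of l j] assms
    by (simp add: snoc_ratio_def snoc_weight_snoc inv_weight_snoc field_simps)
qed

section \<open>The classical antisymmetrizer\<close>

text \<open>k! times the (xs, ys) entry of the antisymmetrizer A^(k) at q = 1.\<close>

definition alt_count :: "nat \<Rightarrow> nat list \<Rightarrow> nat list \<Rightarrow> int" where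
  "alt_count k xs ys = (\<Sum>\<sigma>\<in>{\<sigma>. \<sigma> permutes {..<k}}. if permute_list \<sigma> xs = ys then sign \<sigma> else 0)"

lemma permutes_lessThan_permutation: "p permutes {..<(k::nat)} \<Longrightarrow> permutation p"
  by (rule permutes_imp_permutation) simp_all

lemma permute_list_inv_eq_iff:
  assumes "\<sigma> permutes {..<length xs}" "length ys = length xs"
  shows "permute_list (inv \<sigma>) ys = xs \<longleftrightarrow> permute_list \<sigma> xs = ys"
proof
  assume "permute_list (inv \<sigma>) ys = xs"
  then show "permute_list \<sigma> xs = ys"
    using assms by (metis permute_list_compose permute_list_id permutes_inv_o(2))
next
  assume "permute_list \<sigma> xs = ys"
  then show "permute_list (inv \<sigma>) ys = xs"
    using assms by (metis permute_list_compose permute_list_id permutes_inv permutes_inv_o(1))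
qed

lemma alt_count_commute:
  assumes "length xs = k" "length ys = k"
  shows "alt_count k ys xs = alt_count k xs ys"
proof -
  have "alt_count k ys xs =
      (\<Sum>\<sigma>\<in>{\<sigma>. \<sigma> permutes {..<k}}. if permute_list (inv \<sigma>) ys = xs then sign (inv \<sigma>) else 0)"
    unfolding alt_count_def by (rule sum_permutations_inverse)
  also have "\<dots> = alt_count k xs ys"
    unfolding alt_count_def using assms
    by (intro sum.cong refl)
      (simp add: permute_list_inv_eq_iff sign_inverse permutes_lessThan_permutation)
  finally show ?thesis .
qed

lemma alt_count_permute_left:
  assumes p: "p permutes {..<k}" and "length xs = k"
  shows "alt_count k (permute_list p xs) ys = sign p * alt_count k xs ys"
proof -
  have "alt_count k (permute_list p xs) ys =
      (\<Sum>s\<in>{s. s permutes {..<k}}. if permute_list (p \<circ> s) xs = ys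
        then sign p * sign (p \<circ> s) else 0)"
    unfolding alt_count_def using assms
  proof (intro sum.cong refl)
    fix s assume "s \<in> {s. s permutes {..<k}}"
    then have "sign p * sign (p \<circ> s) = sign s"
        "permute_list s (permute_list p xs) = permute_list (p \<circ> s) xs"
      using assms by (simp_all add: sign_compose permutes_lessThan_permutation permute_list_compose)
    then show "(if permute_list s (permute_list p xs) = ys then sign s else 0) =
        (if permute_list (p \<circ> s) xs = ys then sign p * sign (p \<circ> s) else 0)"
      by simp
  qed
  also have "\<dots> = (\<Sum>s\<in>{s. s permutes {..<k}}. if permute_list s xs = ys then sign p * sign s else 0)"
    by (rule setum_permutations_compose_left[OF p, symmetric])
  also have "\<dots> = sign p * alt_count k xs ys"
    unfolding alt_count_def sum_distrib_left by (intro sum.cong refl) simp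
  finally show ?thesis .
qed

lemma alt_count_permute_right:
  assumes "p permutes {..<k}" "length xs = k" "length ys = k"
  shows "alt_count k xs (permute_list p ys) = sign p * alt_count k xs ys"
  using alt_count_commute[of "permute_list p ys" k xs] alt_count_commute[of ys k xs]
    alt_count_permute_left[of p k ys xs] assms
  by simp

lemma alt_count_swap_adj_left:
  assumes "Suc p < k" "length xs = k"
  shows "alt_count k (swap_adj p xs) ys = - alt_count k xs ys"
proof -
  have t: "transpose p (Suc p) permutes {..<k}"
    using assms by (intro permutes_swap_id) auto
  have "alt_count k (swap_adj p xs) ys = sign (transpose p (Suc p)) * alt_count k xs ys"
    using alt_count_permute_left[OF t assms(2)] permute_list_transpose_Suc[of p xs] assms by simp
  then show ?thesis by (simp add: sign_swap_id)
qed

lemma alt_count_swap_adj_right: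
  assumes "Suc p < k" "length xs = k" "length ys = k"
  shows "alt_count k xs (swap_adj p ys) = - alt_count k xs ys"
proof -
  have t: "transpose p (Suc p) permutes {..<k}"
    using assms by (intro permutes_swap_id) auto
  have "alt_count k xs (swap_adj p ys) = sign (transpose p (Suc p)) * alt_count k xs ys"
    using alt_count_permute_right[OF t assms(2,3)] permute_list_transpose_Suc[of p ys] assms by simp
  then show ?thesis by (simp add: sign_swap_id)
qed

lemma mset_eq_if_alt_count_nonzero:
  assumes "alt_count k xs ys \<noteq> 0" "length xs = k"
  shows "mset ys = mset xs"
proof -
  have "\<exists>\<sigma>. \<sigma> permutes {..<k} \<and> permute_list \<sigma> xs = ys"
  proof (rule ccontr)
    assume "\<not> ?thesis"
    then have "alt_count k xs ys = 0"
      unfolding alt_count_def by (intro sum.neutral) auto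
    with assms(1) show False ..
  qed
  then obtain \<sigma> where "\<sigma> permutes {..<k}" "permute_list \<sigma> xs = ys" by blast
  then show ?thesis using assms(2) by auto
qed

lemma alt_count_nondistinct:
  assumes "\<not> distinct xs" "length xs = k"
  shows "alt_count k xs ys = 0"
proof -
  obtain a b where ab: "a < k" "b < k" "a \<noteq> b" "xs ! a = xs ! b"
    using assms by (auto simp: distinct_conv_nth)
  then have "permute_list (transpose a b) xs = xs"
    using assms by (intro nth_equalityI) (auto simp: permute_list_def transpose_def)
  then have "alt_count k xs ys = - alt_count k xs ys"
    using alt_count_permute_left[of "transpose a b" k xs ys] ab assms
    by (simp add: permutes_swap_id sign_swap_id)
  then show ?thesis by simp
qed

lemma permute_list_snoc:
  assumes "t permutes {..<length zs}"
  shows "permute_list t (zs @ [a]) = permute_list t zs @ [a]"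
proof (rule nth_equalityI)
  fix i assume "i < length (permute_list t (zs @ [a]))"
  then show "permute_list t (zs @ [a]) ! i = (permute_list t zs @ [a]) ! i"
    using permutes_not_in[OF assms, of i] permutes_in_image[OF assms, of i]
    by (cases "i = length zs") (auto simp: permute_list_def nth_append)
qed simp

lemma permute_list_transpose_last:
  "b < length xs \<Longrightarrow> permute_list (transpose (length xs) b) (xs @ [j]) = xs[b := j] @ [xs ! b]"
  by (intro nth_equalityI) (auto simp: permute_list_def nth_append transpose_def nth_list_update)

lemma alt_count_snoc:
  assumes lx: "length xs = m" and ly: "length ys = m"
  shows "alt_count (Suc m) (xs @ [j]) (ys @ [l]) =
    (if j = l then alt_count m xs ys else 0) -
    (\<Sum>b<m. if xs ! b = l then alt_count m (xs[b := j]) ys else 0)"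
proof -
  let ?f = "\<lambda>s. if permute_list s (xs @ [j]) = ys @ [l] then sign s else (0::int)"
  let ?P = "{t. t permutes {..<m}}"
  have moved: "(\<Sum>t\<in>?P. ?f (transpose m b \<circ> t)) =
      - (if xs ! b = l then alt_count m (xs[b := j]) ys else 0)" if b: "b < m" for b
  proof -
    have "?f (transpose m b \<circ> t) =
        - (if xs ! b = l \<and> permute_list t (xs[b := j]) = ys then sign t else 0)"
        if t: "t \<in> ?P" for t
    proof -
      have "permute_list (transpose m b \<circ> t) (xs @ [j]) = permute_list t (xs[b := j]) @ [xs ! b]"
        using t b lx permutes_subset[of t "{..<m}" "{..<Suc m}"]
          permute_list_transpose_last[of b xs j, unfolded lx]
        by (simp add: permute_list_compose permute_list_snoc)
      moreover have "sign (transpose m b \<circ> t) = - sign t"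
        using t b by
          (simp add: sign_compose permutation_swap_id permutes_lessThan_permutation sign_swap_id)
      ultimately show ?thesis using lx ly by auto
    qed
    then have "(\<Sum>t\<in>?P. ?f (transpose m b \<circ> t)) =
        (\<Sum>t\<in>?P. - (if xs ! b = l \<and> permute_list t (xs[b := j]) = ys then sign t else 0))"
      by (rule sum.cong[OF refl])
    also have "\<dots> = - (if xs ! b = l then alt_count m (xs[b := j]) ys else 0)"
      unfolding alt_count_def sum_negf by (cases "xs ! b = l") simp_all
    finally show ?thesis .
  qed
  have "alt_count (Suc m) (xs @ [j]) (ys @ [l]) = sum ?f {s. s permutes insert m {..<m}}"
    unfolding alt_count_def lessThan_Suc ..
  also have "\<dots> = (\<Sum>b\<in>insert m {..<m}. \<Sum>t\<in>?P. ?f (transpose m b \<circ> t))"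
    by (rule sum_over_permutations_insert) auto
  also have "\<dots> = (\<Sum>t\<in>?P. ?f t) + (\<Sum>b<m. \<Sum>t\<in>?P. ?f (transpose m b \<circ> t))"
    by (simp cong: if_cong)
  also have "(\<Sum>t\<in>?P. ?f t) = (if j = l then alt_count m xs ys else 0)"
    unfolding alt_count_def using lx ly
    by (cases "j = l") (auto simp: permute_list_snoc intro!: sum.cong sum.neutral)
  also have "(\<Sum>b<m. \<Sum>t\<in>?P. ?f (transpose m b \<circ> t)) =
      - (\<Sum>b<m. if xs ! b = l then alt_count m (xs[b := j]) ys else 0)"
    unfolding sum_negf[symmetric] using moved by (intro sum.cong) auto
  finally show ?thesis by simp
qed

lemma alt_count_0: "alt_count 0 [] [] = 1"
  by (simp add: alt_count_def)

section \<open>Explicit form of the q-antisymmetrizer and of M_1 ... M_k\<close>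

lemma word_perm_append: "word_perm (u @ v) = word_perm u \<circ> word_perm v"
  by (induct u) (simp_all add: word_perm_def comp_assoc)

lemma word_perm_eq_apply_adj_transps: "word_perm w = apply_adj_transps w"
  by (induct w) (simp_all add: word_perm_def)

lemma word_perm_permutes: "\<forall>p\<in>set w. Suc p < k \<Longrightarrow> word_perm w permutes {..<k}"
  unfolding word_perm_eq_apply_adj_transps by (rule permutes_apply_adj_transps) auto

lemma permutes_lessThan_word:
  assumes "\<sigma> permutes {..<k}"
  shows "\<exists>w. (\<forall>p\<in>set w. Suc p < k) \<and> word_perm w = \<sigma>"
  using assms finite_lessThan
proof (induct \<sigma> rule: permutes_induct)
  case id
  show ?case by (intro exI[of _ "[]"]) (simp add: word_perm_def)
next
  case (swap a b p)
  then obtain w where w: "\<forall>p\<in>set w. Suc p < k" "word_perm w = p" by blast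
  define v where "v = adj_transp_seq (min a b) (max a b)"
  have "word_perm v = transpose a b"
    using swap(3) unfolding v_def word_perm_eq_apply_adj_transps
    by (cases "a < b") (simp_all add: adj_transp_seq_correct transpose_commute min_def max_def)
  moreover have "\<forall>p\<in>set v. Suc p < k"
    using swap(1-3) by (auto simp: v_def set_adj_transp_seq min_def max_def)
  ultimately show ?case
    using w by (intro exI[of _ "v @ w"]) (auto simp: word_perm_append)
qed

lemma Pq_eval:
  assumes "a < n" "b < n"
  shows "Pq n q (a, b) (c, d) = (if c = b \<and> d = a then q b a else 0)"
proof -
  have "Pq n q (a, b) (c, d) =
      (\<Sum>a'<n. \<Sum>b'<n. if b' = b then if a' = a then
        (if c = b \<and> d = a then q b' a' else 0) else 0 else 0)"
    unfolding Pq_def by (intro sum.cong refl) (auto simp: Emat_def)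
  then show ?thesis
    using assms by simp
qed

lemma Ploc_eval:
  assumes xs: "xs \<in> idx n k" and zs: "zs \<in> idx n k" and p: "Suc p < k"
  shows "Ploc n q k p xs zs = (if zs = swap_adj p xs then q (xs ! Suc p) (xs ! p) else 0)"
proof -
  have "zs = swap_adj p xs \<longleftrightarrow> zs ! p = xs ! Suc p \<and> zs ! Suc p = xs ! p \<and>
      (\<forall>r<k. r \<noteq> p \<and> r \<noteq> Suc p \<longrightarrow> xs ! r = zs ! r)"
    using length_idx[OF xs] length_idx[OF zs] p
    by (auto simp: nth_swap_adj intro!: nth_equalityI)
  then show ?thesis
    using xs p unfolding Ploc_def by (auto simp: Pq_eval idx_iff)
qed

lemma mmul_Ploc:
  assumes "xs \<in> idx n k" "Suc p < k"
  shows "mmul n k (Ploc n q k p) B xs ys = q (xs ! Suc p) (xs ! p) * B (swap_adj p xs) ys"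
proof -
  have "mmul n k (Ploc n q k p) B xs ys = Ploc n q k p xs (swap_adj p xs) * B (swap_adj p xs) ys"
    unfolding mmul_def using assms
    by (intro sum.mono_neutral_right[of _ "{swap_adj p xs}", simplified])
       (auto simp: Ploc_eval swap_adj_in_idx)
  then show ?thesis using assms by (simp add: Ploc_eval swap_adj_in_idx)
qed

lemma word_mat_eval:
  assumes par: "is_parametric n q"
  shows "\<forall>p\<in>set w. Suc p < k \<Longrightarrow> xs \<in> idx n k \<Longrightarrow> word_mat n q k w xs ys =
    (if ys = permute_list (word_perm w) xs then inv_weight q ys / inv_weight q xs else 0)"
proof (induct w arbitrary: xs)
  case Nil
  then show ?case
    using inv_weight_nonzero[OF par] by (auto simp: word_mat_def word_perm_def mid_def)
next
  case (Cons p w)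
  have p: "Suc p < k" and w: "\<forall>p\<in>set w. Suc p < k" using Cons.prems by auto
  have "permute_list (word_perm (p # w)) xs = permute_list (word_perm w) (swap_adj p xs)"
    using word_perm_permutes[OF w] length_idx[OF Cons.prems(2)] p
    by (simp add: word_perm_def permute_list_compose permute_list_transpose_Suc)
  moreover have "inv_weight q (swap_adj p xs) = q (xs ! Suc p) (xs ! p) * inv_weight q xs"
    using Cons.prems(2) p by (intro inv_weight_swap_adj[OF par]) (auto simp: idx_def)
  moreover have "q (xs ! Suc p) (xs ! p) \<noteq> 0"
    using par Cons.prems(2) p by (auto simp: is_parametric_def idx_iff)
  ultimately show ?case
    using Cons.hyps[OF w swap_adj_in_idx[OF Cons.prems(2) p]] mmul_Ploc[OF Cons.prems(2) p]
    by (auto simp: word_mat_def)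
qed

lemma Aq_eval:
  assumes par: "is_parametric n q" and xs: "xs \<in> idx n k"
  shows "Aq n q k xs ys =
    1 / of_nat (fact k) * (of_int (alt_count k xs ys) * inv_weight q ys / inv_weight q xs)"
proof -
  have "Pperm n q k \<sigma> xs ys =
      (if permute_list \<sigma> xs = ys then inv_weight q ys / inv_weight q xs else 0)"
    if "\<sigma> permutes {..<k}" for \<sigma>
  proof -
    let ?P = "\<lambda>w. (\<forall>p\<in>set w. Suc p < k) \<and> word_perm w = \<sigma>"
    have "?P (SOME w. ?P w)"
      using permutes_lessThan_word[OF that] by (rule someI_ex)
    then show ?thesis
      unfolding Pperm_def using word_mat_eval[OF par _ xs] by auto
  qed
  then show ?thesis
    unfolding Aq_def alt_count_def of_int_sum sum_distrib_right sum_divide_distrib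
    by (intro arg_cong2[where f = "(*)"] refl sum.cong) auto
qed

definition monom :: "(nat \<Rightarrow> nat \<Rightarrow> 'a::monoid_mult) \<Rightarrow> nat list \<Rightarrow> nat list \<Rightarrow> 'a" where
  "monom M ys xs = prod_list (map2 M ys xs)"

lemma monom_Nil [simp]: "monom M [] [] = 1"
  by (simp add: monom_def)

lemma monom_Cons [simp]: "monom M (y # ys) (x # xs) = M y x * monom M ys xs"
  by (simp add: monom_def)

lemma monom_append:
  "length ys1 = length xs1 \<Longrightarrow> monom M (ys1 @ ys2) (xs1 @ xs2) = monom M ys1 xs1 * monom M ys2 xs2"
  by (simp add: monom_def)

lemma mmul_Mloc:
  assumes xs: "xs \<in> idx n k" and a: "a < k"
  shows "mmul n k (Mloc k M a) B xs ys = (\<Sum>v<n. M (xs ! a) v * B (xs[a := v]) ys)"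
proof -
  let ?upd = "\<lambda>v. xs[a := v]"
  have len: "length xs = k" using length_idx[OF xs] .
  have "mmul n k (Mloc k M a) B xs ys = (\<Sum>zs\<in>?upd ` {..<n}. Mloc k M a xs zs * B zs ys)"
    unfolding mmul_def
  proof (rule sum.mono_neutral_right)
    show "?upd ` {..<n} \<subseteq> idx n k"
      using xs by (auto intro: list_update_in_idx)
    show "\<forall>zs\<in>idx n k - ?upd ` {..<n}. Mloc k M a xs zs * B zs ys = 0"
    proof
      fix zs assume zs: "zs \<in> idx n k - ?upd ` {..<n}"
      have "\<not> (\<forall>r<k. r \<noteq> a \<longrightarrow> xs ! r = zs ! r)"
      proof
        assume "\<forall>r<k. r \<noteq> a \<longrightarrow> xs ! r = zs ! r"
        then have "zs = ?upd (zs ! a)"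
          using zs len a by (auto simp: nth_list_update idx_iff intro!: nth_equalityI)
        moreover have "zs ! a < n"
          using zs a by (auto simp: idx_iff)
        ultimately show False
          using zs by blast
      qed
      then show "Mloc k M a xs zs * B zs ys = 0"
        unfolding Mloc_def by auto
    qed
  qed simp
  also have "\<dots> = (\<Sum>v<n. Mloc k M a xs (?upd v) * B (?upd v) ys)"
    using a len by (intro sum.reindex[unfolded comp_def] inj_onI) (metis nth_list_update_eq)
  also have "\<dots> = (\<Sum>v<n. M (xs ! a) v * B (xs[a := v]) ys)"
    using a len by (simp add: Mloc_def nth_list_update)
  finally show ?thesis .
qed

lemma Mprod_fold:
  assumes "a \<le> k" "xs \<in> idx n k" "ys \<in> idx n k"
  shows "foldr (\<lambda>a A. mmul n k (Mloc k M a) A) [a..<k] mid xs ys =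
    (if take a xs = take a ys then monom M (drop a xs) (drop a ys) else 0)"
  using assms(1,2)
proof (induct a arbitrary: xs rule: inc_induct)
  case base
  then show ?case
    using length_idx[OF base(1)] length_idx[OF assms(3)] by (simp add: mid_def)
next
  case (step a)
  have lx: "length xs = k" and ly: "length ys = k"
    using length_idx step.prems assms(3) by auto
  have ya: "ys ! a < n" using assms(3) step.hyps by (simp add: idx_iff)
  have "take (Suc a) (xs[a := v]) = take (Suc a) ys \<longleftrightarrow> take a xs = take a ys \<and> v = ys ! a" for v
    using lx ly step.hyps by (simp add: take_Suc_conv_app_nth take_update_swap list_update_append)
  then have "foldr (\<lambda>a A. mmul n k (Mloc k M a) A) [a..<k] mid xs ys =
      (\<Sum>v<n. if take a xs = take a ys \<and> v = ys ! a
        then M (xs ! a) v * monom M (drop (Suc a) xs) (drop (Suc a) ys) else 0)"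
    using step.hyps list_update_in_idx[OF step.prems]
    by (auto simp: upt_conv_Cons mmul_Mloc[OF step.prems] intro!: sum.cong)
  also have "\<dots> = (if take a xs = take a ys then monom M (drop a xs) (drop a ys) else 0)"
    using lx ly \<open>a < k\<close> ya by (simp add: Cons_nth_drop_Suc[symmetric])
  finally show ?case .
qed

lemma Mprod_eq_monom: "xs \<in> idx n k \<Longrightarrow> ys \<in> idx n k \<Longrightarrow> Mprod n M k xs ys = monom M xs ys"
  using Mprod_fold[of 0 k xs n ys M] unfolding Mprod_def by simp

section \<open>Manin matrices\<close>

locale C_algebra =
  fixes \<iota> :: "complex \<Rightarrow> 'a::ring_1"
  assumes is_C_algebra: "is_C_algebra \<iota>"
begin

lemma iota_1 [simp]: "\<iota> 1 = 1"
  and iota_add: "\<iota> (a + b) = \<iota> a + \<iota> b"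
  and iota_mult: "\<iota> (a * b) = \<iota> a * \<iota> b"
  and iota_central: "\<iota> a * x = x * \<iota> a"
  using is_C_algebra unfolding is_C_algebra_def by blast+

lemma iota_0 [simp]: "\<iota> 0 = 0"
  using iota_add[of 0 0] by simp

lemma iota_minus: "\<iota> (- a) = - \<iota> a"
  using iota_add[of "- a" a] by (simp add: eq_neg_iff_add_eq_0)

lemma iota_diff: "\<iota> (a - b) = \<iota> a - \<iota> b"
  using iota_add[of a "- b"] iota_minus[of b] by simp

lemma iota_sum: "\<iota> (sum f S) = (\<Sum>x\<in>S. \<iota> (f x))"
  by (induct S rule: infinite_finite_induct) (simp_all add: iota_add)

lemma iota_of_nat [simp]: "\<iota> (of_nat k) = of_nat k"
  by (induct k) (simp_all add: iota_add)


lemma iota_left_commute: "x * (\<iota> a * y) = \<iota> a * (x * y)"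
  by (metis iota_central mult.assoc)

lemma iota_iota_left_commute: "\<iota> a * (\<iota> b * y) = \<iota> b * (\<iota> a * y)"
  by (simp add: mult.assoc[symmetric] iota_mult[symmetric] mult.commute)

lemma add_self_eq_0_imp_eq_0: "(x::'a) + x = 0 \<Longrightarrow> x = 0"
proof -
  assume "x + x = 0"
  have "x = \<iota> (1/2 + 1/2) * x" by simp
  also have "\<dots> = \<iota> (1/2) * (x + x)" by (simp only: iota_add algebra_simps)
  finally show "x = 0" using \<open>x + x = 0\<close> by simp
qed

end

locale qmanin = C_algebra \<iota> for \<iota> :: "complex \<Rightarrow> 'a::ring_1" +
  fixes n :: nat and q :: "nat \<Rightarrow> nat \<Rightarrow> complex" and M :: "nat \<Rightarrow> nat \<Rightarrow> 'a"
  assumes q_parametric: "is_parametric n q"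
    and M_manin: "manin \<iota> n q M"
begin

lemma q_diag: "u < n \<Longrightarrow> q u u = 1"
  using q_parametric by (simp add: is_parametric_def)

lemma q_nonzero: "u < n \<Longrightarrow> v < n \<Longrightarrow> q u v \<noteq> 0"
  using q_parametric by (simp add: is_parametric_def)

lemma iota_q_inverse: "u < n \<Longrightarrow> v < n \<Longrightarrow> \<iota> (q u v) * (\<iota> (q v u) * y) = y"
  using q_parametric by (simp add: mult.assoc[symmetric] iota_mult[symmetric] is_parametric_def)

lemma manin_column:
  assumes "a < n" "b < n" "c < n"
  shows "M a c * M b c = \<iota> (q b a) * (M b c * M a c)"
proof (cases a b rule: linorder_cases)
  case less
  then show ?thesis using M_manin assms unfolding manin_def by (simp add: mult.assoc)
next
  case equal
  then show ?thesis using assms by (simp add: q_diag)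
next
  case greater
  then have "M b c * M a c = \<iota> (q a b) * (M a c * M b c)"
    using M_manin assms unfolding manin_def by (simp add: mult.assoc)
  then show ?thesis using assms by (simp add: iota_q_inverse)
qed

text \<open>
  The defining relations of a Manin matrix, multiplied by \<iota> (q d c) and rearranged so that they
  hold in every order of the row indices a, b and of the column indices c, d.
\<close>

definition manin_form :: "nat \<Rightarrow> nat \<Rightarrow> nat \<Rightarrow> nat \<Rightarrow> 'a" where
  "manin_form a b c d = M a d * M b c + \<iota> (q d c) * (M a c * M b d) - \<iota> (q b a) * (M b d * M a c)
      - \<iota> (q b a) * (\<iota> (q d c) * (M b c * M a d))"

lemma manin_form_swap_rows:
  "a < n \<Longrightarrow> b < n \<Longrightarrow> c < n \<Longrightarrow> d < n \<Longrightarrow> manin_form a b c d = - (\<iota> (q b a) * manin_form b a c d)"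
  unfolding manin_form_def by
    (simp add: algebra_simps iota_q_inverse iota_iota_left_commute[of "q b a" "q d c"])

lemma manin_form_swap_cols:
  "a < n \<Longrightarrow> b < n \<Longrightarrow> c < n \<Longrightarrow> d < n \<Longrightarrow> manin_form a b c d = \<iota> (q d c) * manin_form a b d c"
  unfolding manin_form_def by
    (simp add: algebra_simps iota_q_inverse iota_iota_left_commute[of "q d c" "q b a"])

lemma manin_form_sorted:
  assumes "a \<le> b" "b < n" "c \<le> d" "d < n"
  shows "manin_form a b c d = 0"
proof -
  consider "a = b" | "a < b" "c = d" | "a < b" "c < d"
    using assms by linarith
  then show ?thesis
  proof cases
    case 1
    then show ?thesis unfolding manin_form_def using assms by (simp add: q_diag)
  next
    case 2
    then have "manin_form a b c d = (M a c * M b c - \<iota> (q b a) * (M b c * M a c))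
        + (M a c * M b c - \<iota> (q b a) * (M b c * M a c))"
      unfolding manin_form_def using assms by (simp add: q_diag algebra_simps)
    then show ?thesis using manin_column[of a b c] 2 assms by simp
  next
    case 3
    have "M a c * M b d - \<iota> (q b a * q c d) * M b d * M a c + \<iota> (q c d) * M a d * M b c
        - \<iota> (q b a) * M b c * M a d = 0"
      using M_manin 3 assms unfolding manin_def by blast
    moreover have "\<iota> (q d c) * (M a c * M b d - \<iota> (q b a * q c d) * M b d * M a c
        + \<iota> (q c d) * M a d * M b c - \<iota> (q b a) * M b c * M a d) = manin_form a b c d"
      unfolding manin_form_def iota_mult using 3 assms
      by (simp add: algebra_simps iota_q_inverse iota_iota_left_commute[of "q d c" "q b a"])
    ultimately show ?thesis by simp
  qed
qed

lemma manin_form_eq_0: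
  assumes "a < n" "b < n" "c < n" "d < n"
  shows "manin_form a b c d = 0"
proof -
  have rows_sorted: "manin_form a' b' c d = 0" if "a' \<le> b'" "b' < n" for a' b'
    using manin_form_sorted[of a' b' c d] manin_form_sorted[of a' b' d c]
      manin_form_swap_cols[of a' b' c d] that assms
    by (cases "c \<le> d") auto
  show ?thesis
    using rows_sorted[of a b] rows_sorted[of b a] manin_form_swap_rows[of a b c d] assms
    by (cases "a \<le> b") auto
qed

lemma monom_swap_relation:
  assumes ys: "ys \<in> idx n m" and us: "us \<in> idx n m" and p: "Suc p < m"
  shows "monom M ys (swap_adj p us) + \<iota> (q (us ! Suc p) (us ! p)) * monom M ys us =
    \<iota> (q (ys ! Suc p) (ys ! p)) *
      (monom M (swap_adj p ys) (swap_adj p us) +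
        \<iota> (q (us ! Suc p) (us ! p)) * monom M (swap_adj p ys) us)"
proof -
  obtain ys1 a b ys2 where ys_split: "ys = ys1 @ a # b # ys2" "length ys1 = p"
    using p length_idx[OF ys] by (auto elim: split_at_adj)
  obtain us1 c d us2 where us_split: "us = us1 @ c # d # us2" "length us1 = p"
    using p length_idx[OF us] by (auto elim: split_at_adj)
  define L R where "L = monom M ys1 us1" and "R = monom M ys2 us2"
  have "a < n" "b < n" "c < n" "d < n"
    using ys us unfolding ys_split us_split idx_def by auto
  then have "manin_form a b c d = 0"
    by (rule manin_form_eq_0)
  moreover have "L * (manin_form a b c d * R) = L * (M a d * (M b c * R))
        + \<iota> (q d c) * (L * (M a c * (M b d * R)))
      - \<iota> (q b a) * (L * (M b d * (M a c * R)) + \<iota> (q d c) * (L * (M b c * (M a d * R))))"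
    unfolding manin_form_def by (simp add: algebra_simps iota_left_commute[of L])
  ultimately show ?thesis
    unfolding ys_split(1) us_split(1) L_def R_def using ys_split(2) us_split(2)
    by (simp add: swap_adj_append monom_append nth_append)
qed

definition asym_prod :: "nat \<Rightarrow> nat list \<Rightarrow> nat list \<Rightarrow> 'a" where
  "asym_prod m zs us = (\<Sum>ys\<in>idx n m.
    \<iota> (of_int (alt_count m zs ys) * inv_weight q ys) * monom M ys us)"

definition asym_prod_norm :: "nat \<Rightarrow> nat list \<Rightarrow> nat list \<Rightarrow> 'a" where
  "asym_prod_norm m zs us =
    (\<Sum>ys\<in>idx n m. \<iota> (of_int (alt_count m zs ys) * inv_weight q ys / inv_weight q us)
      * monom M ys us)"

lemma asym_prod_swap_col:
  assumes zs: "zs \<in> idx n m" and us: "us \<in> idx n m" and p: "Suc p < m"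
  shows "asym_prod m zs (swap_adj p us) = - (\<iota> (q (us ! Suc p) (us ! p)) * asym_prod m zs us)"
proof -
  define c where "c ys = \<iota> (of_int (alt_count m zs ys) * inv_weight q ys)" for ys
  define F where "F ys = monom M ys (swap_adj p us)
      + \<iota> (q (us ! Suc p) (us ! p)) * monom M ys us" for ys
  define S where "S = (\<Sum>ys\<in>idx n m. c ys * F ys)"
  \<comment> \<open>S is both invariant and anti-invariant under the reindexing ys := swap_adj p ys.\<close>
  have S_eq: "S = asym_prod m zs (swap_adj p us) + \<iota> (q (us ! Suc p) (us ! p)) * asym_prod m zs us"
    unfolding S_def F_def asym_prod_def c_def
    by (simp add: algebra_simps sum.distrib sum_distrib_left iota_iota_left_commute)
  have swapped: "c (swap_adj p ys) * F (swap_adj p ys) = - (c ys * F ys)"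
    if ys: "ys \<in> idx n m" for ys
  proof -
    have "c (swap_adj p ys) = - (\<iota> (q (ys ! Suc p) (ys ! p)) * c ys)"
      unfolding c_def
      using alt_count_swap_adj_right[OF p length_idx[OF zs] length_idx[OF ys]]
        inv_weight_swap_adj[OF q_parametric, of ys p] ys p
      by (simp add: iota_mult[symmetric] iota_minus[symmetric] idx_def algebra_simps)
    then have "c (swap_adj p ys) * F (swap_adj p ys) =
        - (\<iota> (q (ys ! Suc p) (ys ! p)) * (c ys * F (swap_adj p ys)))"
      by (simp add: mult.assoc)
    also have "\<iota> (q (ys ! Suc p) (ys ! p)) * (c ys * F (swap_adj p ys)) = c ys * F ys"
      unfolding c_def F_def monom_swap_relation[OF ys us p] by (rule iota_iota_left_commute)
    finally show ?thesis .
  qed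
  have "S = (\<Sum>ys\<in>idx n m. c (swap_adj p ys) * F (swap_adj p ys))"
    unfolding S_def by (rule sum_idx_swap_adj[OF p, symmetric])
  also have "\<dots> = (\<Sum>ys\<in>idx n m. - (c ys * F ys))"
    using swapped by (intro sum.cong) auto
  also have "\<dots> = - S"
    by (simp add: S_def sum_negf)
  finally have "S + S = 0"
    by (simp only: eq_neg_iff_add_eq_0)
  then have "S = 0"
    by (rule add_self_eq_0_imp_eq_0)
  then show ?thesis
    using S_eq by (simp add: eq_neg_iff_add_eq_0 add.commute)
qed

lemma asym_prod_norm_eq:
  "asym_prod_norm m zs us = \<iota> (1 / inv_weight q us) * asym_prod m zs us"
  unfolding asym_prod_norm_def asym_prod_def sum_distrib_left
  by (intro sum.cong refl) (simp add: mult.assoc[symmetric] iota_mult[symmetric] field_simps)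

lemma asym_prod_norm_swap_col:
  assumes zs: "zs \<in> idx n m" and us: "us \<in> idx n m" and p: "Suc p < m"
  shows "asym_prod_norm m zs (swap_adj p us) = - asym_prod_norm m zs us"
proof -
  have "inv_weight q (swap_adj p us) = q (us ! Suc p) (us ! p) * inv_weight q us"
    using inv_weight_swap_adj[OF q_parametric, of us p] us p by (auto simp: idx_def)
  moreover have "q (us ! Suc p) (us ! p) \<noteq> 0" "inv_weight q us \<noteq> 0"
    using us p q_nonzero inv_weight_nonzero[OF q_parametric us] by (auto simp: idx_iff)
  ultimately have "\<iota> (1 / inv_weight q (swap_adj p us)) * \<iota> (q (us ! Suc p) (us ! p)) =
      \<iota> (1 / inv_weight q us)"
    by (simp add: iota_mult[symmetric])
  then show ?thesis
    unfolding asym_prod_norm_eq asym_prod_swap_col[OF zs us p]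
    by (simp add: mult.assoc[symmetric])
qed

lemma asym_prod_norm_swap_row:
  "zs \<in> idx n m \<Longrightarrow> Suc p < m \<Longrightarrow> asym_prod_norm m (swap_adj p zs) us = - asym_prod_norm m zs us"
  unfolding asym_prod_norm_def
  by (simp add: alt_count_swap_adj_left length_idx iota_minus sum_negf)

section \<open>Partial traces of the q-antisymmetrizer\<close>

definition full_trace :: "nat \<Rightarrow> 'a" where
  "full_trace m = (\<Sum>xs\<in>idx n m. \<Sum>ys\<in>idx n m.
     \<iota> (of_int (alt_count m xs ys) * inv_weight q ys / inv_weight q xs) * monom M ys xs)"

text \<open>The (j, l) entry of the matrix G_m.\<close>

definition partial_trace :: "nat \<Rightarrow> nat \<Rightarrow> nat \<Rightarrow> 'a" where
  "partial_trace m j l = (\<Sum>xs\<in>idx n m. \<Sum>ys\<in>idx n m.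
     \<iota> (of_int (alt_count (Suc m) (xs @ [j]) (ys @ [l])) * inv_weight q (ys @ [l])
        / inv_weight q (xs @ [j]))
       * monom M ys xs)"

definition partial_trace_term :: "nat \<Rightarrow> nat \<Rightarrow> nat \<Rightarrow> nat \<Rightarrow> 'a" where
  "partial_trace_term m j l i = (\<Sum>zs\<in>idx n m.
     if zs ! i = j then \<iota> (snoc_ratio q j l zs) * asym_prod_norm m zs (zs[i := l]) else 0)"

lemma ecoef_eq_full_trace: "ecoef \<iota> n q M m = \<iota> (1 / fact m) * full_trace m"
  unfolding ecoef_def full_trace_def sum_distrib_left
proof (intro sum.cong refl)
  fix xs ys assume xs: "xs \<in> idx n m" and ys: "ys \<in> idx n m"
  show "\<iota> (Aq n q m xs ys) * Mprod n M m ys xs = \<iota> (1 / fact m) *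
      (\<iota> (of_int (alt_count m xs ys) * inv_weight q ys / inv_weight q xs) * monom M ys xs)"
    unfolding Aq_eval[OF q_parametric xs] Mprod_eq_monom[OF ys xs]
      iota_mult mult.assoc of_nat_fact ..
qed

lemma full_trace_0: "full_trace 0 = 1"
  by (simp add: full_trace_def idx_0 alt_count_0)

lemma ecoef_0: "ecoef \<iota> n q M 0 = 1"
  by (simp add: ecoef_eq_full_trace full_trace_0)

lemma partial_trace_0: "partial_trace 0 j l = (if j = l then 1 else 0)"
  using alt_count_snoc[of "[]" 0 "[]" j l] by (simp add: partial_trace_def idx_0 alt_count_0)

lemma partial_trace_term_eq:
  assumes i: "i < m" and j: "j < n" and l: "l < n"
  shows "(\<Sum>xs\<in>idx n m. if xs ! i = l then (\<Sum>ys\<in>idx n m.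
        \<iota> (of_int (alt_count m (xs[i := j]) ys) * inv_weight q (ys @ [l]) / inv_weight q (xs @ [j]))
          * monom M ys xs) else 0)
     = partial_trace_term m j l i"
  unfolding sum_idx_list_update[OF i j l] partial_trace_term_def
proof (intro sum.cong refl)
  fix zs assume zs: "zs \<in> idx n m"
  have "\<iota> (of_int (alt_count m zs ys) * inv_weight q (ys @ [l]) / inv_weight q (zs[i := l] @ [j]))
        * monom M ys (zs[i := l]) =
      \<iota> (snoc_ratio q j l zs) *
        (\<iota> (of_int (alt_count m zs ys) * inv_weight q ys / inv_weight q (zs[i := l]))
        * monom M ys (zs[i := l]))"
    if "zs ! i = j" for ys
  proof (cases "alt_count m zs ys = 0")
    case False
    then have "mset ys = mset zs"
      using mset_eq_if_alt_count_nonzero length_idx[OF zs] by blast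
    note ratio = inv_weight_relabel_ratio[OF q_parametric zs i that j l this]
    have "of_int (alt_count m zs ys) * inv_weight q (ys @ [l]) / inv_weight q (zs[i := l] @ [j]) =
        snoc_ratio q j l zs *
          (of_int (alt_count m zs ys) * inv_weight q ys / inv_weight q (zs[i := l]))"
      unfolding times_divide_eq_right[symmetric] ratio
      by (simp add: mult.left_commute)
    then show ?thesis
      by (simp only: iota_mult mult.assoc)
  qed simp
  moreover have "(zs[i := l])[i := j] = zs" if "zs ! i = j"
    using that by (simp add: list_update_id[of zs i, simplified that])
  ultimately show "(if zs ! i = j then \<Sum>ys\<in>idx n m.
        \<iota> (of_int (alt_count m ((zs[i := l])[i := j]) ys) * inv_weight q (ys @ [l])
          / inv_weight q (zs[i := l] @ [j]))
          * monom M ys (zs[i := l]) else 0) =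
      (if zs ! i = j then \<iota> (snoc_ratio q j l zs) * asym_prod_norm m zs (zs[i := l]) else 0)"
    unfolding asym_prod_norm_def sum_distrib_left by simp
qed

lemma full_trace_snoc_weights:
  assumes "j < n"
  shows "(\<Sum>xs\<in>idx n m. \<Sum>ys\<in>idx n m.
      \<iota> (of_int (alt_count m xs ys) * inv_weight q (ys @ [j]) / inv_weight q (xs @ [j]))
        * monom M ys xs)
    = full_trace m"
  unfolding full_trace_def
proof (intro sum.cong refl)
  fix xs ys assume xs: "xs \<in> idx n m" and ys: "ys \<in> idx n m"
  show "\<iota> (of_int (alt_count m xs ys) * inv_weight q (ys @ [j]) / inv_weight q (xs @ [j]))
      * monom M ys xs =
      \<iota> (of_int (alt_count m xs ys) * inv_weight q ys / inv_weight q xs) * monom M ys xs"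
  proof (cases "alt_count m xs ys = 0")
    case False
    then have "mset ys = mset xs"
      using mset_eq_if_alt_count_nonzero length_idx[OF xs] by blast
    then show ?thesis
      using inv_weight_snoc_ratio[OF q_parametric xs assms]
      by (simp only: times_divide_eq_right[symmetric])
  qed simp
qed

lemma partial_trace_expand:
  assumes j: "j < n" and l: "l < n"
  shows "partial_trace m j l = (if j = l then full_trace m else 0)
    - (\<Sum>i<m. partial_trace_term m j l i)"
proof -
  let ?t = "\<lambda>N xs ys. \<iota> (of_int N * inv_weight q (ys @ [l]) / inv_weight q (xs @ [j]))
      * monom M ys xs"
  have expand: "?t (alt_count (Suc m) (xs @ [j]) (ys @ [l])) xs ys =
      (if j = l then ?t (alt_count m xs ys) xs ys else 0) -
      (\<Sum>i<m. if xs ! i = l then ?t (alt_count m (xs[i := j]) ys) xs ys else 0)"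
    if "xs \<in> idx n m" "ys \<in> idx n m" for xs ys
    unfolding alt_count_snoc[OF length_idx[OF that(1)] length_idx[OF that(2)]]
    by (auto simp: left_diff_distrib diff_divide_distrib sum_distrib_right sum_divide_distrib
        iota_diff iota_sum intro!: sum.cong)
  have "partial_trace m j l =
      (\<Sum>xs\<in>idx n m. \<Sum>ys\<in>idx n m. if j = l then ?t (alt_count m xs ys) xs ys else 0) -
      (\<Sum>xs\<in>idx n m. \<Sum>ys\<in>idx n m. \<Sum>i<m.
        if xs ! i = l then ?t (alt_count m (xs[i := j]) ys) xs ys else 0)"
    unfolding partial_trace_def by (simp add: expand sum_subtractf)
  also have "(\<Sum>xs\<in>idx n m. \<Sum>ys\<in>idx n m. if j = l then ?t (alt_count m xs ys) xs ys else 0) =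
      (if j = l then full_trace m else 0)"
    using full_trace_snoc_weights[OF l] by (cases "j = l") simp_all
  also have "(\<Sum>xs\<in>idx n m. \<Sum>ys\<in>idx n m. \<Sum>i<m.
        if xs ! i = l then ?t (alt_count m (xs[i := j]) ys) xs ys else 0) =
      (\<Sum>i<m. \<Sum>xs\<in>idx n m. if xs ! i = l then
        (\<Sum>ys\<in>idx n m. ?t (alt_count m (xs[i := j]) ys) xs ys) else 0)"
  proof -
    have if_sum: "(\<Sum>x\<in>A. if P then f x else 0) = (if P then sum f A else 0)"
      for P f and A :: "'b set"
      by (cases P) simp_all
    show ?thesis
      unfolding sum.swap[of _ "{..<m}"] if_sum ..
  qed
  also have "\<dots> = (\<Sum>i<m. partial_trace_term m j l i)"
    using partial_trace_term_eq[OF _ j l] by simp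
  finally show ?thesis .
qed

lemma partial_trace_term_Suc:
  assumes i: "Suc i < m" and j: "j < n" and l: "l < n"
  shows "partial_trace_term m j l (Suc i) = partial_trace_term m j l i"
proof -
  define f where "f k zs = (if zs ! k = j then
    \<iota> (snoc_ratio q j l zs) * asym_prod_norm m zs (zs[k := l]) else 0)"
    for k zs
  have "f (Suc i) (swap_adj i zs) = f i zs" if zs: "zs \<in> idx n m" for zs
  proof -
    have lz: "length zs = m" using length_idx[OF zs] .
    have "(swap_adj i zs)[Suc i := l] = swap_adj i (zs[i := l])"
      using i lz by (intro nth_equalityI) (auto simp: nth_swap_adj nth_list_update)
    then have "asym_prod_norm m (swap_adj i zs) ((swap_adj i zs)[Suc i := l])
        = asym_prod_norm m zs (zs[i := l])"
      using asym_prod_norm_swap_row[OF zs i]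
        asym_prod_norm_swap_col[OF zs list_update_in_idx[OF zs l] i]
      by simp
    moreover have "snoc_ratio q j l (swap_adj i zs) = snoc_ratio q j l zs"
      using i lz by (intro snoc_ratio_mset mset_swap_adj) simp
    moreover have "swap_adj i zs ! Suc i = zs ! i"
      using i lz by (simp add: nth_swap_adj)
    ultimately show ?thesis
      by (simp add: f_def)
  qed
  then have "(\<Sum>zs\<in>idx n m. f (Suc i) (swap_adj i zs)) = (\<Sum>zs\<in>idx n m. f i zs)"
    by (rule sum.cong[OF refl])
  then show ?thesis
    unfolding partial_trace_term_def f_def[symmetric] sum_idx_swap_adj[OF i] .
qed

lemma partial_trace_term_eq_last:
  assumes "i \<le> m" "j < n" "l < n"
  shows "partial_trace_term (Suc m) j l i = partial_trace_term (Suc m) j l m"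
  using assms(1)
proof (induct i rule: inc_induct)
  case (step i)
  then show ?case using partial_trace_term_Suc[of i "Suc m" j l] assms by simp
qed simp

lemma snoc_ratio_asym_prod_norm:
  assumes zs: "zs \<in> idx n m" and j: "j < n" and l: "l < n"
  shows "\<iota> (snoc_ratio q j l (zs @ [j])) * asym_prod_norm (Suc m) (zs @ [j]) (zs @ [l]) =
    \<iota> (q j l) * (\<Sum>c<n. (\<Sum>ys\<in>idx n m. \<iota> (of_int (alt_count (Suc m) (zs @ [j]) (ys @ [c]))
        * inv_weight q (ys @ [c]) / inv_weight q (zs @ [j])) * monom M ys zs) * M c l)"
proof -
  have pointwise: "\<iota> (snoc_ratio q j l (zs @ [j])) * (\<iota> (of_int N * w / inv_weight q (zs @ [l]))
      * monom M (ys @ [c]) (zs @ [l])) =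
      \<iota> (q j l) * (\<iota> (of_int N * w / inv_weight q (zs @ [j])) * monom M ys zs * M c l)"
    if "ys \<in> idx n m" for N w ys c
  proof -
    have "snoc_ratio q j l (zs @ [j]) * (of_int N * w / inv_weight q (zs @ [l])) =
        of_int N * w * (snoc_ratio q j l (zs @ [j]) / inv_weight q (zs @ [l]))"
      by (simp add: ac_simps)
    also have "\<dots> = q j l * (of_int N * w / inv_weight q (zs @ [j]))"
      unfolding snoc_ratio_snoc[OF q_parametric zs j l] by (simp add: ac_simps)
    finally have "snoc_ratio q j l (zs @ [j]) * (of_int N * w / inv_weight q (zs @ [l])) =
        q j l * (of_int N * w / inv_weight q (zs @ [j]))" .
    moreover have "monom M (ys @ [c]) (zs @ [l]) = monom M ys zs * M c l"
      using length_idx[OF that] length_idx[OF zs] by (simp add: monom_append)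
    ultimately show ?thesis
      by (simp only: mult.assoc[symmetric] iota_mult[symmetric])
  qed
  have "\<iota> (snoc_ratio q j l (zs @ [j])) * asym_prod_norm (Suc m) (zs @ [j]) (zs @ [l]) =
      (\<Sum>ys\<in>idx n m. \<Sum>c<n. \<iota> (q j l) * (\<iota> (of_int (alt_count (Suc m) (zs @ [j]) (ys @ [c]))
        * inv_weight q (ys @ [c]) / inv_weight q (zs @ [j])) * monom M ys zs * M c l))"
    unfolding asym_prod_norm_def sum_idx_Suc sum_distrib_left
    by (intro sum.cong refl) (simp add: pointwise)
  also have "\<dots> = \<iota> (q j l) * (\<Sum>c<n.
        (\<Sum>ys\<in>idx n m. \<iota> (of_int (alt_count (Suc m) (zs @ [j]) (ys @ [c]))
        * inv_weight q (ys @ [c]) / inv_weight q (zs @ [j])) * monom M ys zs) * M c l)"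
    unfolding sum_distrib_left sum_distrib_right by (subst sum.swap) (simp add: mult.assoc)
  finally show ?thesis .
qed

lemma partial_trace_term_last:
  assumes j: "j < n" and l: "l < n"
  shows "partial_trace_term (Suc m) j l m = \<iota> (q j l) * (\<Sum>c<n. partial_trace m j c * M c l)"
proof -
  have "partial_trace_term (Suc m) j l m =
      (\<Sum>zs\<in>idx n m. \<iota> (snoc_ratio q j l (zs @ [j])) * asym_prod_norm (Suc m) (zs @ [j]) (zs @ [l]))"
    unfolding partial_trace_term_def sum_idx_Suc
  proof (intro sum.cong refl)
    fix zs assume zs: "zs \<in> idx n m"
    show "(\<Sum>a<n. if (zs @ [a]) ! m = j then \<iota> (snoc_ratio q j l (zs @ [a])) *
          asym_prod_norm (Suc m) (zs @ [a]) ((zs @ [a])[m := l]) else 0) =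
        \<iota> (snoc_ratio q j l (zs @ [j])) * asym_prod_norm (Suc m) (zs @ [j]) (zs @ [l])"
      using j length_idx[OF zs] by (simp add: nth_append list_update_append)
  qed
  also have "\<dots> = (\<Sum>zs\<in>idx n m. \<iota> (q j l) * (\<Sum>c<n. (\<Sum>ys\<in>idx n m.
      \<iota> (of_int (alt_count (Suc m) (zs @ [j]) (ys @ [c])) * inv_weight q (ys @ [c])
        / inv_weight q (zs @ [j]))
        * monom M ys zs) * M c l))"
    using snoc_ratio_asym_prod_norm[OF _ j l] by (intro sum.cong refl) simp
  also have "\<dots> = \<iota> (q j l) * (\<Sum>c<n. partial_trace m j c * M c l)"
    unfolding partial_trace_def sum_distrib_left sum_distrib_right
      sum.swap[of _ "idx n m" "{..<n}"] ..
  finally show ?thesis .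
qed

lemma partial_trace_Suc:
  assumes j: "j < n" and l: "l < n"
  shows "partial_trace (Suc m) j l = (if j = l then full_trace (Suc m) else 0)
    - of_nat (Suc m) * (\<iota> (q j l) * (\<Sum>c<n. partial_trace m j c * M c l))"
proof -
  have "(\<Sum>i<Suc m. partial_trace_term (Suc m) j l i) = (\<Sum>i<Suc m. partial_trace_term (Suc m) j l m)"
    by (intro sum.cong refl partial_trace_term_eq_last[OF _ j l]) simp
  then show ?thesis
    by (simp add: partial_trace_expand[OF j l] partial_trace_term_last[OF j l])
qed

lemma partial_trace_vanish:
  assumes "j < n"
  shows "partial_trace n j l = 0"
  unfolding partial_trace_def
proof (intro sum.neutral ballI)
  fix xs ys assume xs: "xs \<in> idx n n" and ys: "ys \<in> idx n n"
  have "set (xs @ [j]) \<subseteq> {..<n}"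
    using xs assms by (auto simp: idx_def)
  then have "card (set (xs @ [j])) \<le> n"
    using card_mono[OF finite_lessThan] by fastforce
  have "\<not> distinct (xs @ [j])"
  proof
    assume "distinct (xs @ [j])"
    then have "card (set (xs @ [j])) = Suc n"
      using length_idx[OF xs] by (simp only: distinct_card) simp
    with \<open>card (set (xs @ [j])) \<le> n\<close> show False by simp
  qed
  then show "\<iota> (of_int (alt_count (Suc n) (xs @ [j]) (ys @ [l])) * inv_weight q (ys @ [l]) /
      inv_weight q (xs @ [j])) * monom M ys xs = 0"
    using length_idx[OF xs] by (simp add: alt_count_nondistinct)
qed

section \<open>The Cayley-Hamilton recursion\<close>

lemma qpow_Suc:
  assumes j: "j < n"
  shows "qpow \<iota> n q M (Suc m) j l = (\<Sum>c<n. \<iota> (q j c) * qpow \<iota> n q M m j c * M c l)"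
proof (cases m)
  case 0
  then show ?thesis
    using j by (simp add: q_diag if_distrib[of "\<lambda>x. \<iota> (q j _) * x * M _ l"] cong: if_cong)
next
  case (Suc m')
  have "qpow \<iota> n q M (Suc m) j l =
      (\<Sum>i<n. \<Sum>a<n. \<Sum>b<n. \<iota> (Pq n q (i, j) (a, b)) * (qpow \<iota> n q M m a i * M b l))"
    using Suc by (simp add: qstar_def)
  also have "\<dots> = (\<Sum>i<n. \<Sum>a<n. \<Sum>b<n.
      if b = i then if a = j then \<iota> (q j i) * (qpow \<iota> n q M m a i * M b l) else 0 else 0)"
    using j by (intro sum.cong refl) (auto simp: Pq_eval)
  also have "\<dots> = (\<Sum>c<n. \<iota> (q j c) * qpow \<iota> n q M m j c * M c l)"
    using j by (simp add: mult.assoc)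
  finally show ?thesis .
qed

lemma iota_minus_one_power [simp]: "\<iota> ((-1) ^ k) = (-1) ^ k"
  by (induct k) (simp_all add: iota_mult iota_minus)

definition ch_partial_sum :: "nat \<Rightarrow> nat \<Rightarrow> nat \<Rightarrow> 'a" where
  "ch_partial_sum m j l = \<iota> ((-1) ^ m * q l j / fact m) * partial_trace m j l"

lemma ch_partial_sum_0: "j < n \<Longrightarrow> ch_partial_sum 0 j l = (if j = l then 1 else 0)"
  by (simp add: ch_partial_sum_def partial_trace_0 q_diag)

lemma ch_partial_sum_Suc:
  assumes j: "j < n" and l: "l < n"
  shows "ch_partial_sum (Suc m) j l = (if j = l then (-1) ^ Suc m * ecoef \<iota> n q M (Suc m) else 0)
    + (\<Sum>c<n. \<iota> (q j c) * ch_partial_sum m j c * M c l)"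
proof -
  define c where "c = (-1) ^ Suc m * q l j / fact (Suc m)"
  define S where "S = (\<Sum>c<n. partial_trace m j c * M c l)"
  have qq: "q u v * q v u = 1" if "u < n" "v < n" for u v
    using q_parametric that by (simp add: is_parametric_def)
  have "c * of_nat (Suc m) * q j l = - ((-1) ^ m / fact m)"
    unfolding c_def using qq[OF j l]
    by (simp add: fact_Suc[of m] divide_simps mult.assoc[symmetric]
        mult.commute[of "q l j"] del: of_nat_Suc)
  then have recursion_part: "\<iota> c * (of_nat (Suc m) * (\<iota> (q j l) * S))
      = - (\<iota> ((-1) ^ m / fact m) * S)"
    by (simp only: iota_of_nat[of "Suc m", symmetric] mult.assoc[symmetric] iota_mult[symmetric]
        iota_minus mult_minus_left)
  have diagonal_part: "\<iota> c * (if j = l then full_trace (Suc m) else 0) =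
      (if j = l then (-1) ^ Suc m * ecoef \<iota> n q M (Suc m) else 0)"
  proof (cases "j = l")
    case True
    then have "c = (-1) ^ Suc m * (1 / fact (Suc m))"
      using l by (simp add: c_def q_diag)
    then show ?thesis
      unfolding ecoef_eq_full_trace using True
      by (simp only: iota_mult iota_minus_one_power mult.assoc simp_thms if_True)
  qed simp
  have summand: "\<iota> (q j d) * ch_partial_sum m j d * M d l
      = \<iota> ((-1) ^ m / fact m) * (partial_trace m j d * M d l)"
    if "d < n" for d
  proof -
    have "q j d * ((-1) ^ m * q d j / fact m) = (-1) ^ m / fact m"
      using qq[OF j that] by (simp add: mult.left_commute[of "q j d"] mult.assoc[symmetric])
    then show ?thesis
      unfolding ch_partial_sum_def by (simp only: mult.assoc[symmetric] iota_mult[symmetric])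
  qed
  have "ch_partial_sum (Suc m) j l =
      \<iota> c * (if j = l then full_trace (Suc m) else 0) - \<iota> c * (of_nat (Suc m) * (\<iota> (q j l) * S))"
    unfolding ch_partial_sum_def partial_trace_Suc[OF j l] c_def S_def by (rule right_diff_distrib)
  also have "\<dots> = (if j = l then (-1) ^ Suc m * ecoef \<iota> n q M (Suc m) else 0)
      + \<iota> ((-1) ^ m / fact m) * S"
    unfolding diagonal_part recursion_part by (rule diff_minus_eq_add)
  also have "\<iota> ((-1) ^ m / fact m) * S = (\<Sum>d<n. \<iota> (q j d) * ch_partial_sum m j d * M d l)"
    unfolding S_def sum_distrib_left by (intro sum.cong refl summand[symmetric]) simp
  finally show ?thesis .
qed

lemma ch_partial_sum_eq:
  assumes j: "j < n" and l: "l < n"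
  shows "ch_partial_sum m j l =
    (\<Sum>k=0..m. (-1) ^ k * ecoef \<iota> n q M k * qpow \<iota> n q M (m - k) j l)"
  using l
proof (induct m arbitrary: l)
  case 0
  then show ?case by (simp add: ch_partial_sum_0[OF j] ecoef_0)
next
  case (Suc m)
  let ?e = "\<lambda>k. (-1) ^ k * ecoef \<iota> n q M k"
  have summand: "\<iota> (q j c) * ch_partial_sum m j c * M c l =
      (\<Sum>k=0..m. ?e k * (\<iota> (q j c) * qpow \<iota> n q M (m - k) j c * M c l))" if "c < n" for c
    unfolding Suc.hyps[OF that] sum_distrib_left sum_distrib_right
    by (intro sum.cong refl) (simp add: mult.assoc iota_left_commute)
  then have "(\<Sum>c<n. \<iota> (q j c) * ch_partial_sum m j c * M c l) =
      (\<Sum>c<n. \<Sum>k=0..m. ?e k * (\<iota> (q j c) * qpow \<iota> n q M (m - k) j c * M c l))"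
    by (intro sum.cong refl) simp
  also have "\<dots> = (\<Sum>k=0..m. \<Sum>c<n. ?e k * (\<iota> (q j c) * qpow \<iota> n q M (m - k) j c * M c l))"
    by (rule sum.swap)
  also have "\<dots> = (\<Sum>k=0..m. ?e k * qpow \<iota> n q M (Suc (m - k)) j l)"
    by (simp add: qpow_Suc[OF j] sum_distrib_left)
  finally show ?case
    using Suc.prems by (simp add: ch_partial_sum_Suc[OF j] Suc_diff_le add.commute)
qed

end

theorem mainTheorem17:
  fixes \<iota> :: "complex \<Rightarrow> 'a::ring_1"
    and n :: nat
    and q :: "nat \<Rightarrow> nat \<Rightarrow> complex"
    and M :: "nat \<Rightarrow> nat \<Rightarrow> 'a"
  assumes "is_C_algebra \<iota>"
    and "is_parametric n q"
    and "manin \<iota> n q M"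
  shows "\<forall>i<n. \<forall>j<n.
    (\<Sum>k=0..n. (-1) ^ k * ecoef \<iota> n q M k * qpow \<iota> n q M (n - k) i j) = 0"
proof -
  interpret qmanin \<iota> n q M
    using assms by unfold_locales
  show ?thesis
    using ch_partial_sum_eq[of _ _ n] by (simp add: ch_partial_sum_def partial_trace_vanish)
qed

end
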